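(* Let $\mathbb{F}$ be a field and $(\mathcal{C},f,m)$ a Floer triple over $\mathbb{F}$. Then the associated bidirect system of chain complexes $(CM,p,i,\partial)$, indexed by $A=B=(\mathbb{R},\le)$, is tame; i.e. the maps $\mu_a$ ($a\in\mathbb{R}$), $\nu^b$ ($b\in\mathbb{R}$) and $\mu$ are isomorphisms.
   Context: A Floer triple $(\mathcal{C},f,m)$ over a field $\mathbb{F}$: a set $\mathcal{C}$, $f\colon\mathcal{C}\to\mathbb{R}$, $m\colon\mathcal{C}\times\mathcal{C}\to\mathbb{F}$ with (i) $\mathcal{C}_a^b=\{c: a\le f(c)\le b\}$ finite for all $a\le b$; (ii) $m(c_1,c_2)\ne0\Rightarrow f(c_1)<f(c_2)$; (iii) $\sum_{c_2}m(c_1,c_2)m(c_2,c_3)=0$ for all $c_1,c_3$. $CM_a^b$ is the $\mathbb{F}$-vector space with basis $\mathcal{C}_a^b$ (zero if $a>b$), $\partial_a^b c=\sum_{c'\in\mathcal{C}_a^b}m(c',c)c'$, $HM_a^b$ its homology. For $a_1\le a_2$, $p^b_{a_2,a_1}\colon CM^b_{a_1}\to CM^b_{a_2}$ sends $c\mapsto c$ if $f(c)\ge a_2$ and $c\mapsto0$ otherwise; for $b_1\le b_2$, $i_a^{b_2,b_1}$ is the inclusion $CM_a^{b_1}\to CM_a^{b_2}$. Limits: $\varprojlim_a$ of a system with maps $X_{a_1}\to X_{a_2}$ ($a_1\le a_2$) = compatible families; $\varinjlim_b$ of a system with maps $X^{b_1}\to X^{b_2}$ = direct sum modulo identifying elements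 with their images. Let $L^b=\varprojlim_a CM_a^b$ (w.r.t. $p^b$) and $D_a=\varinjlim_b CM_a^b$ (w.r.t. $i_a$), chain complexes, with canonical maps $i_a^b\colon CM_a^b\to D_a$. Define $\mu_a\colon\varinjlim_b HM_a^b\to H(D_a)$ induced by $[x]\mapsto[i_a^bx]$; $\mu\colon\varinjlim_b H(L^b)\to H(\varinjlim_b L^b)$ induced by the canonical maps $L^b\to\varinjlim_b L$; $\nu^b\colon H(L^b)\to\varprojlim_a HM_a^b$, $[(x_a)_a]\mapsto([x_a])_a$. *)

theory Defs
  imports Main "HOL.Real"
begin

definition Cab :: "'c set \<Rightarrow> ('c \<Rightarrow> real) \<Rightarrow> real \<Rightarrow> real \<Rightarrow> 'c set" where
  "Cab C f a b = {c \<in> C. a \<le> f c \<and> f c \<le> b}"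

definition floer_triple :: "'c set \<Rightarrow> ('c \<Rightarrow> real) \<Rightarrow> ('c \<Rightarrow> 'c \<Rightarrow> 'k::field) \<Rightarrow> bool" where
  "floer_triple C f m \<longleftrightarrow>
     (\<forall>a b. a \<le> b \<longrightarrow> finite (Cab C f a b)) \<and>
     (\<forall>c1\<in>C. \<forall>c2\<in>C. m c1 c2 \<noteq> 0 \<longrightarrow> f c1 < f c2) \<and>
     (\<forall>c1\<in>C. \<forall>c3\<in>C.
        (\<Sum>c2\<in>{c2\<in>C. m c1 c2 * m c2 c3 \<noteq> 0}. m c1 c2 * m c2 c3) = 0)"

section \<open>The Morse complexes CM_a^b (chains = finitely supported coefficient functions)\<close>

definition CM :: "'c set \<Rightarrow> ('c \<Rightarrow> real) \<Rightarrow> real \<Rightarrow> real \<Rightarrow> ('c \<Rightarrow> 'k::zero) set" where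
  "CM C f a b = {x. \<forall>c. x c \<noteq> 0 \<longrightarrow> c \<in> Cab C f a b}"

definition bd :: "'c set \<Rightarrow> ('c \<Rightarrow> real) \<Rightarrow> ('c \<Rightarrow> 'c \<Rightarrow> 'k::field) \<Rightarrow> real \<Rightarrow> real
    \<Rightarrow> ('c \<Rightarrow> 'k) \<Rightarrow> ('c \<Rightarrow> 'k)" where
  "bd C f m a b x = (\<lambda>c'. if c' \<in> Cab C f a b then (\<Sum>c\<in>Cab C f a b. m c' c * x c) else 0)"

definition prj :: "('c \<Rightarrow> real) \<Rightarrow> real \<Rightarrow> ('c \<Rightarrow> 'k::zero) \<Rightarrow> ('c \<Rightarrow> 'k)" where
  "prj f a2 x = (\<lambda>c. if a2 \<le> f c then x c else 0)"

definition csub :: "('c \<Rightarrow> 'k::ab_group_add) \<Rightarrow> ('c \<Rightarrow> 'k) \<Rightarrow> ('c \<Rightarrow> 'k)" where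
  "csub x y = (\<lambda>c. x c - y c)"

definition cycles :: "'v set \<Rightarrow> ('v \<Rightarrow> 'v) \<Rightarrow> 'v \<Rightarrow> 'v set" where
  "cycles V d z0 = {x \<in> V. d x = z0}"

definition hclass :: "'v set \<Rightarrow> ('v \<Rightarrow> 'v) \<Rightarrow> 'v \<Rightarrow> ('v \<Rightarrow> 'v \<Rightarrow> 'v) \<Rightarrow> 'v \<Rightarrow> 'v set" where
  "hclass V d z0 sub z = {z' \<in> cycles V d z0. sub z' z \<in> d ` V}"

definition homology :: "'v set \<Rightarrow> ('v \<Rightarrow> 'v) \<Rightarrow> 'v \<Rightarrow> ('v \<Rightarrow> 'v \<Rightarrow> 'v) \<Rightarrow> 'v set set" where
  "homology V d z0 sub = hclass V d z0 sub ` cycles V d z0"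

text \<open>Map induced on homology by a chain map g; the complex parameters are those of the target.\<close>
definition hmap :: "'w set \<Rightarrow> ('w \<Rightarrow> 'w) \<Rightarrow> 'w \<Rightarrow> ('w \<Rightarrow> 'w \<Rightarrow> 'w) \<Rightarrow> ('v \<Rightarrow> 'w)
    \<Rightarrow> 'v set \<Rightarrow> 'w set" where
  "hmap W d z0 sub g c = hclass W d z0 sub (g (SOME z. z \<in> c))"

text \<open>Direct limit of a system X b with maps phi b1 b2 : X b1 -> X b2 (b1 <= b2),
  as equivalence classes of pairs (b, x), x in X b.\<close>
definition dl_class :: "(real \<Rightarrow> 'x set) \<Rightarrow> (real \<Rightarrow> real \<Rightarrow> 'x \<Rightarrow> 'x) \<Rightarrow> real \<Rightarrow> 'x
    \<Rightarrow> (real \<times> 'x) set" where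
  "dl_class X \<phi> b x = {(b', x'). x' \<in> X b' \<and>
      (\<exists>b''. b \<le> b'' \<and> b' \<le> b'' \<and> \<phi> b b'' x = \<phi> b' b'' x')}"

definition dlim :: "(real \<Rightarrow> 'x set) \<Rightarrow> (real \<Rightarrow> real \<Rightarrow> 'x \<Rightarrow> 'x) \<Rightarrow> (real \<times> 'x) set set" where
  "dlim X \<phi> = {dl_class X \<phi> b x | b x. x \<in> X b}"

definition dl_rep :: "(real \<times> 'x) set \<Rightarrow> real \<times> 'x" where
  "dl_rep \<xi> = (SOME p. p \<in> \<xi>)"

definition dl_map :: "(real \<Rightarrow> 'x set) \<Rightarrow> (real \<Rightarrow> real \<Rightarrow> 'x \<Rightarrow> 'x) \<Rightarrow> (real \<Rightarrow> 'x \<Rightarrow> 'x)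
    \<Rightarrow> (real \<times> 'x) set \<Rightarrow> (real \<times> 'x) set" where
  "dl_map X \<phi> g \<xi> = (case dl_rep \<xi> of (b, x) \<Rightarrow> dl_class X \<phi> b (g b x))"

definition dl_sub :: "(real \<Rightarrow> 'x set) \<Rightarrow> (real \<Rightarrow> real \<Rightarrow> 'x \<Rightarrow> 'x) \<Rightarrow> ('x \<Rightarrow> 'x \<Rightarrow> 'x)
    \<Rightarrow> (real \<times> 'x) set \<Rightarrow> (real \<times> 'x) set \<Rightarrow> (real \<times> 'x) set" where
  "dl_sub X \<phi> sub \<xi> \<eta> = (case dl_rep \<xi> of (b1, x1) \<Rightarrow> case dl_rep \<eta> of (b2, x2) \<Rightarrow>
      dl_class X \<phi> (max b1 b2) (sub (\<phi> b1 (max b1 b2) x1) (\<phi> b2 (max b1 b2) x2)))"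

text \<open>Inverse limit of a system X a with maps pi a1 a2 : X a1 -> X a2 (a1 <= a2):
  compatible families.\<close>
definition ilim :: "(real \<Rightarrow> 'x set) \<Rightarrow> (real \<Rightarrow> real \<Rightarrow> 'x \<Rightarrow> 'x) \<Rightarrow> (real \<Rightarrow> 'x) set" where
  "ilim X \<pi> = {x. (\<forall>a. x a \<in> X a) \<and> (\<forall>a1 a2. a1 \<le> a2 \<longrightarrow> \<pi> a1 a2 (x a1) = x a2)}"

definition HM where
  "HM C f m a b = homology (CM C f a b) (bd C f m a b) (\<lambda>_. 0) csub"

text \<open>D_a = lim_b CM_a^b (w.r.t. the inclusions i_a)\<close>
definition DD where "DD C f a = dlim (\<lambda>b. CM C f a b) (\<lambda>_ _ x. x)"
definition dD where "dD C f m a = dl_map (\<lambda>b. CM C f a b) (\<lambda>_ _ x. x) (\<lambda>b. bd C f m a b)"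
definition zD where "zD C f a = dl_class (\<lambda>b. CM C f a b) (\<lambda>_ _ x. x) 0 (\<lambda>_. 0)"
definition subD where "subD C f a = dl_sub (\<lambda>b. CM C f a b) (\<lambda>_ _ x. x) csub"
definition HD where "HD C f m a = homology (DD C f a) (dD C f m a) (zD C f a) (subD C f a)"

definition limHM where
  "limHM C f m a = dlim (\<lambda>b. HM C f m a b)
      (\<lambda>b1 b2. hmap (CM C f a b2) (bd C f m a b2) (\<lambda>_. 0) csub id)"

definition mu_a where
  "mu_a C f m a \<xi> = (case dl_rep \<xi> of (b, c) \<Rightarrow>
      hclass (DD C f a) (dD C f m a) (zD C f a) (subD C f a)
        (dl_class (\<lambda>b. CM C f a b) (\<lambda>_ _ x. x) b (SOME z. z \<in> c)))"

definition LL where "LL C f b = ilim (\<lambda>a. CM C f a b) (\<lambda>a1 a2. prj f a2)"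
definition dL where "dL C f m b x = (\<lambda>a. bd C f m a b (x a))"
definition fsub :: "(real \<Rightarrow> 'c \<Rightarrow> 'k::ab_group_add) \<Rightarrow> (real \<Rightarrow> 'c \<Rightarrow> 'k) \<Rightarrow> (real \<Rightarrow> 'c \<Rightarrow> 'k)"
  where "fsub x y = (\<lambda>a. csub (x a) (y a))"
definition HL where "HL C f m b = homology (LL C f b) (dL C f m b) (\<lambda>_ _. 0) fsub"

definition ilimHM where
  "ilimHM C f m b = ilim (\<lambda>a. HM C f m a b)
      (\<lambda>a1 a2. hmap (CM C f a2 b) (bd C f m a2 b) (\<lambda>_. 0) csub (prj f a2))"

definition nu where
  "nu C f m b c = (let x = (SOME z. z \<in> c) in
      (\<lambda>a. hclass (CM C f a b) (bd C f m a b) (\<lambda>_. 0) csub (x a)))"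

text \<open>lim_b L^b (maps L^b1 -> L^b2 induced by the inclusions, i.e. identity on families)\<close>
definition LimL where "LimL C f = dlim (\<lambda>b. LL C f b) (\<lambda>_ _ x. x)"
definition dLimL where "dLimL C f m = dl_map (\<lambda>b. LL C f b) (\<lambda>_ _ x. x) (\<lambda>b. dL C f m b)"
definition zLimL where "zLimL C f = dl_class (\<lambda>b. LL C f b) (\<lambda>_ _ x. x) 0 (\<lambda>_ _. 0)"
definition subLimL where "subLimL C f = dl_sub (\<lambda>b. LL C f b) (\<lambda>_ _ x. x) fsub"
definition HLimL where "HLimL C f m = homology (LimL C f) (dLimL C f m) (zLimL C f) (subLimL C f)"

definition limHL where
  "limHL C f m = dlim (\<lambda>b. HL C f m b)
      (\<lambda>b1 b2. hmap (LL C f b2) (dL C f m b2) (\<lambda>_ _. 0) fsub id)"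

definition mu where
  "mu C f m \<xi> = (case dl_rep \<xi> of (b, c) \<Rightarrow>
      hclass (LimL C f) (dLimL C f m) (zLimL C f) (subLimL C f)
        (dl_class (\<lambda>b. LL C f b) (\<lambda>_ _ x. x) b (SOME z. z \<in> c)))"

end

theory Submission
  imports Defs "HOL-Library.Function_Algebras" "HOL.Vector_Spaces"
begin

text \<open>
  The maps \<open>\<mu>_a\<close> and \<open>\<mu>\<close> compare a direct limit of homologies with the homology of a
  direct limit.  In both cases the system consists of inclusions of complexes
  (\<open>CM_a^b \<subseteq> CM_a^b'\<close>, resp. \<open>L^b \<subseteq> L^b'\<close>) whose differentials agree, so the direct
  limit is the union, and the comparison map is bijective because every cycle and
  every boundary of the union already lives at some stage.

  The map \<open>\<nu>^b\<close> compares the homology of an inverse limit with the inverse limit of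
  homologies.  Here finiteness of the windows \<open>C_a^b\<close> enters: all \<open>CM_a^b\<close> are finite
  dimensional, so an inverse system of nonempty affine subspaces has a nonempty
  inverse limit (a Mittag-Leffler argument, locale \<open>affine_inverse_system\<close>).  Applied
  to the preimages of a compatible family of boundaries it gives injectivity of
  \<open>\<nu>^b\<close>; applied to a compatible family of homology classes it gives surjectivity.
\<close>

section \<open>Homology of a complex presented as a subset of an abelian group\<close>

text \<open>A homology class here is a set of cycles; we pick
  representatives by choice.\<close>
abbreviation repr :: "'a set \<Rightarrow> 'a" where
  "repr c \<equiv> SOME z. z \<in> c"

text \<open>A chain complex given by a subgroup \<open>V\<close> of an abelian group and an additive
  endomorphism \<open>d\<close> of it.\<close>
locale chain_complex =
  fixes V :: "'v::ab_group_add set" and d :: "'v \<Rightarrow> 'v"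
  assumes zero_closed: "0 \<in> V"
    and diff_closed: "x \<in> V \<Longrightarrow> y \<in> V \<Longrightarrow> x - y \<in> V"
    and d_closed: "x \<in> V \<Longrightarrow> d x \<in> V"
    and d_diff: "x \<in> V \<Longrightarrow> y \<in> V \<Longrightarrow> d (x - y) = d x - d y"
begin

lemma d_zero: "d 0 = 0"
  using d_diff[OF zero_closed zero_closed] by simp

lemma neg_closed: "x \<in> V \<Longrightarrow> - x \<in> V"
  using diff_closed[OF zero_closed] by fastforce

lemma add_closed: "x \<in> V \<Longrightarrow> y \<in> V \<Longrightarrow> x + y \<in> V"
  using diff_closed[OF _ neg_closed[of y]] by fastforce

lemma d_neg: "x \<in> V \<Longrightarrow> d (- x) = - d x"
  using d_diff[OF zero_closed, of x] d_zero by simp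

lemma d_add: "x \<in> V \<Longrightarrow> y \<in> V \<Longrightarrow> d (x + y) = d x + d y"
  using d_diff[OF _ neg_closed[of y], of x] d_neg[of y] by simp

lemma zero_boundary: "0 \<in> d ` V"
  using d_zero zero_closed by force

lemma add_boundary: assumes "u \<in> d ` V" "w \<in> d ` V" shows "u + w \<in> d ` V"
proof -
  obtain x y where "x \<in> V" "y \<in> V" "u = d x" "w = d y" using assms by blast
  then show ?thesis using d_add[of x y] add_closed[of x y] by (metis image_eqI)
qed

lemma diff_boundary: assumes "u \<in> d ` V" "w \<in> d ` V" shows "u - w \<in> d ` V"
proof -
  obtain x y where "x \<in> V" "y \<in> V" "u = d x" "w = d y" using assms by blast
  then show ?thesis using d_diff[of x y] diff_closed[of x y] by (metis image_eqI)
qed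

abbreviation "Z \<equiv> cycles V d 0"
abbreviation "hc \<equiv> hclass V d 0 minus"
abbreviation "H \<equiv> homology V d 0 minus"

lemma cycle_iff: "z \<in> Z \<longleftrightarrow> z \<in> V \<and> d z = 0"
  by (simp add: cycles_def)

lemma hclass_iff: "z' \<in> hc z \<longleftrightarrow> z' \<in> Z \<and> z' - z \<in> d ` V"
  by (simp add: hclass_def)

lemma hclass_self: "z \<in> Z \<Longrightarrow> z \<in> hc z"
  using zero_boundary by (simp add: hclass_iff)

lemma hclass_eq_iff:
  assumes "z1 \<in> Z" "z2 \<in> Z"
  shows "hc z1 = hc z2 \<longleftrightarrow> z1 - z2 \<in> d ` V"
proof
  assume "hc z1 = hc z2"
  then show "z1 - z2 \<in> d ` V" using hclass_self[OF assms(1)] by (simp add: hclass_iff)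
next
  assume h: "z1 - z2 \<in> d ` V"
  show "hc z1 = hc z2"
  proof (rule set_eqI)
    fix z
    have "z - z2 = (z - z1) + (z1 - z2)" "z - z1 = (z - z2) - (z1 - z2)" by simp_all
    then show "z \<in> hc z1 \<longleftrightarrow> z \<in> hc z2"
      using h add_boundary diff_boundary unfolding hclass_iff by metis
  qed
qed

lemma homologyE: assumes "c \<in> H" obtains z where "z \<in> Z" "c = hc z"
  using assms by (auto simp: homology_def)

lemma hclass_in_homology: "z \<in> Z \<Longrightarrow> hc z \<in> H"
  by (simp add: homology_def)

lemma homology_member:
  assumes "c \<in> H" "z \<in> c"
  shows "z \<in> Z" "hc z = c"
proof -
  obtain z0 where z0: "z0 \<in> Z" "c = hc z0" using homologyE[OF assms(1)] .
  then show "z \<in> Z" using assms by (simp add: hclass_iff)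
  then show "hc z = c" using z0 assms hclass_eq_iff by (simp add: hclass_iff)
qed

lemma repr_in: assumes "c \<in> H" shows "repr c \<in> c"
proof -
  obtain z where "z \<in> Z" "c = hc z" using homologyE[OF assms] .
  then show ?thesis using hclass_self by (metis someI)
qed

lemma repr_cycle: "c \<in> H \<Longrightarrow> repr c \<in> Z"
  using homology_member(1) repr_in by blast

lemma hclass_repr: "c \<in> H \<Longrightarrow> hc (repr c) = c"
  using homology_member(2) repr_in by blast

end

section \<open>Direct limits of increasing unions of complexes\<close>

lemma dl_class_eqI:
  fixes Y :: "real \<Rightarrow> 'x set" and \<phi> :: "real \<Rightarrow> real \<Rightarrow> 'x \<Rightarrow> 'x"
  assumes comp: "\<And>b1 b2 b3 y. b1 \<le> b2 \<Longrightarrow> b2 \<le> b3 \<Longrightarrow> y \<in> Y b1 \<Longrightarrow>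
      \<phi> b2 b3 (\<phi> b1 b2 y) = \<phi> b1 b3 y"
    and y: "y \<in> Y b" and y': "y' \<in> Y b'"
    and le: "b \<le> b0" "b' \<le> b0" and eq: "\<phi> b b0 y = \<phi> b' b0 y'"
  shows "dl_class Y \<phi> b y = dl_class Y \<phi> b' y'"
proof -
  have sub: "(b2, y2) \<in> dl_class Y \<phi> b' y'"
    if "(b2, y2) \<in> dl_class Y \<phi> b y" "y \<in> Y b" "y' \<in> Y b'"
      "b \<le> b0" "b' \<le> b0" "\<phi> b b0 y = \<phi> b' b0 y'"
    for b y b' y' b0 b2 y2
  proof -
    from that(1) obtain b3 where h: "y2 \<in> Y b2" "b \<le> b3" "b2 \<le> b3" "\<phi> b b3 y = \<phi> b2 b3 y2"
      by (auto simp: dl_class_def)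
    define b4 where "b4 = max b0 b3"
    have "\<phi> b' b4 y' = \<phi> b0 b4 (\<phi> b' b0 y')" using comp[of b' b0 b4 y'] that by (simp add: b4_def)
    also have "\<dots> = \<phi> b0 b4 (\<phi> b b0 y)" using that by simp
    also have "\<dots> = \<phi> b b4 y" using comp[of b b0 b4 y] that by (simp add: b4_def)
    also have "\<dots> = \<phi> b3 b4 (\<phi> b b3 y)" using comp[of b b3 b4 y] h that by (simp add: b4_def)
    also have "\<dots> = \<phi> b2 b4 y2" using comp[of b2 b3 b4 y2] h by (simp add: b4_def)
    finally show ?thesis using h that by (auto simp: dl_class_def b4_def intro!: exI[of _ b4])
  qed
  show ?thesis
    using sub[OF _ y y' le eq] sub[OF _ y' y le(2,1) eq[symmetric]] by auto
qed

lemma dl_rep_in: assumes "y \<in> Y b" shows "dl_rep (dl_class Y \<phi> b y) \<in> dl_class Y \<phi> b y"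
proof -
  have "(b, y) \<in> dl_class Y \<phi> b y" using assms by (auto simp: dl_class_def)
  then show ?thesis unfolding dl_rep_def by (rule someI)
qed

text \<open>The direct limit along the inclusions is the union \<open>U\<close>, and both
  \<open>\<mu>_a\<close> and \<open>\<mu>\<close> are instances of the comparison map of this locale.\<close>
locale increasing_complexes =
  fixes X :: "real \<Rightarrow> 'v::ab_group_add set" and d :: "real \<Rightarrow> 'v \<Rightarrow> 'v"
  assumes stage: "\<And>b. chain_complex (X b) (d b)"
    and X_mono: "\<And>b1 b2. b1 \<le> b2 \<Longrightarrow> X b1 \<subseteq> X b2"
    and d_mono: "\<And>b1 b2 x. b1 \<le> b2 \<Longrightarrow> x \<in> X b1 \<Longrightarrow> d b2 x = d b1 x"
begin

text \<open>The union complex; its differential is that of any stage containing the chain.\<close>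
definition U :: "'v set" where "U = (\<Union>b. X b)"
definition dU :: "'v \<Rightarrow> 'v" where "dU x = d (SOME b. x \<in> X b) x"

lemma U_iff: "x \<in> U \<longleftrightarrow> (\<exists>b. x \<in> X b)"
  by (auto simp: U_def)

lemma dU_eq: assumes "x \<in> X b" shows "dU x = d b x"
proof -
  let ?b0 = "SOME b. x \<in> X b"
  have b0: "x \<in> X ?b0" using assms by (rule someI)
  have "d (max b ?b0) x = d ?b0 x" by (rule d_mono[OF _ b0]) simp
  moreover have "d (max b ?b0) x = d b x" by (rule d_mono[OF _ assms]) simp
  ultimately show ?thesis by (simp add: dU_def)
qed

lemma common_stage: assumes "x \<in> U" "y \<in> U" obtains b where "x \<in> X b" "y \<in> X b"
proof -
  obtain b1 b2 where "x \<in> X b1" "y \<in> X b2" using assms U_iff by blast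
  then show ?thesis using that X_mono[of b1 "max b1 b2"] X_mono[of b2 "max b1 b2"] by auto
qed

sublocale Un: chain_complex U dU
proof
  show "0 \<in> U" using chain_complex.zero_closed[OF stage] U_iff by blast
  fix x y assume "x \<in> U" "y \<in> U"
  then obtain b where xy: "x \<in> X b" "y \<in> X b" by (rule common_stage)
  have xmy: "x - y \<in> X b" by (rule chain_complex.diff_closed[OF stage xy])
  then show "x - y \<in> U" using U_iff by blast
  show "dU (x - y) = dU x - dU y"
    unfolding dU_eq[OF xmy] dU_eq[OF xy(1)] dU_eq[OF xy(2)] by (rule chain_complex.d_diff[OF stage xy])
next
  fix x assume "x \<in> U"
  then obtain b where b: "x \<in> X b" using U_iff by blast
  have "dU x \<in> X b" unfolding dU_eq[OF b] by (rule chain_complex.d_closed[OF stage b])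
  then show "dU x \<in> U" using U_iff by blast
qed

abbreviation idm :: "real \<Rightarrow> real \<Rightarrow> 'v \<Rightarrow> 'v" where "idm \<equiv> (\<lambda>_ _ x. x)"

text \<open>Along inclusions the class of \<open>x\<close> does not depend on the stage it is taken at.\<close>
definition Ecl :: "'v \<Rightarrow> (real \<times> 'v) set" where
  "Ecl x = {(b', x'). x' \<in> X b' \<and> x' = x}"

lemma dl_class_idm: "dl_class X idm b x = Ecl x"
proof -
  have "\<exists>b''. b \<le> b'' \<and> b' \<le> b''" for b' by (rule exI[of _ "max b b'"]) simp
  then show ?thesis unfolding dl_class_def Ecl_def by auto
qed

lemma inj_Ecl: "inj_on Ecl U"
proof (rule inj_onI)
  fix x y assume "x \<in> U" "y \<in> U" "Ecl x = Ecl y"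
  then obtain b where "(b, x) \<in> Ecl y" using U_iff by (auto simp: Ecl_def)
  then show "x = y" by (simp add: Ecl_def)
qed

lemma dlim_idm: "dlim X idm = Ecl ` U"
proof -
  have "\<xi> \<in> dlim X idm \<longleftrightarrow> (\<exists>x\<in>U. \<xi> = Ecl x)" for \<xi>
    unfolding dlim_def dl_class_idm U_def by blast
  then show ?thesis by blast
qed

lemma dl_rep_Ecl: assumes "x \<in> U" obtains b where "dl_rep (Ecl x) = (b, x)" "x \<in> X b"
proof -
  obtain b0 where "x \<in> X b0" using assms U_iff by blast
  then have "dl_rep (Ecl x) \<in> Ecl x" using dl_rep_in[of x X b0 idm] by (simp add: dl_class_idm)
  then show ?thesis using that by (auto simp: Ecl_def)
qed

abbreviation "DL \<equiv> dlim X idm"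
abbreviation "DM \<equiv> dl_map X idm d"
abbreviation "DS \<equiv> dl_sub X idm minus"
abbreviation "DZ \<equiv> dl_class X idm 0 0"

lemma DM_Ecl: "x \<in> U \<Longrightarrow> DM (Ecl x) = Ecl (dU x)"
  by (rule dl_rep_Ecl, assumption) (simp add: dl_map_def dl_class_idm dU_eq)

lemma DS_Ecl: "x \<in> U \<Longrightarrow> y \<in> U \<Longrightarrow> DS (Ecl x) (Ecl y) = Ecl (x - y)"
  by (rule dl_rep_Ecl, assumption, rule dl_rep_Ecl[of y], assumption)
    (simp add: dl_sub_def dl_class_idm)

lemma DZ_Ecl: "DZ = Ecl 0"
  by (simp add: dl_class_idm)

lemma cycles_DL: "cycles DL DM DZ = Ecl ` Un.Z"
proof -
  have "DM (Ecl x) = DZ \<longleftrightarrow> dU x = 0" if "x \<in> U" for x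
    using inj_on_eq_iff[OF inj_Ecl Un.d_closed[OF that] Un.zero_closed]
    by (simp add: DM_Ecl[OF that] DZ_Ecl)
  then have "{\<xi> \<in> Ecl ` U. DM \<xi> = DZ} = Ecl ` {x \<in> U. dU x = 0}" by blast
  then show ?thesis by (simp add: cycles_def dlim_idm)
qed

lemma boundaries_DL: "DM ` DL = Ecl ` dU ` U"
  unfolding dlim_idm image_image by (rule image_cong) (simp_all add: DM_Ecl)

lemma hclass_DL: assumes z: "z \<in> U" shows "hclass DL DM DZ DS (Ecl z) = Ecl ` Un.hc z"
proof -
  have "DS (Ecl x) (Ecl z) \<in> DM ` DL \<longleftrightarrow> x - z \<in> dU ` U" if "x \<in> U" for x
    unfolding DS_Ecl[OF that z] boundaries_DL
    using inj_on_image_mem_iff[OF inj_Ecl] Un.diff_closed[OF that z] Un.d_closed by blast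
  then have "{\<xi> \<in> Ecl ` Un.Z. DS \<xi> (Ecl z) \<in> DM ` DL} = Ecl ` {x \<in> Un.Z. x - z \<in> dU ` U}"
    using Un.cycle_iff by blast
  then show ?thesis by (simp add: hclass_def cycles_DL)
qed

lemma homology_DL: "homology DL DM DZ DS = (\<lambda>c. Ecl ` c) ` Un.H"
proof -
  have "homology DL DM DZ DS = (\<lambda>z. hclass DL DM DZ DS (Ecl z)) ` Un.Z"
    unfolding homology_def cycles_DL image_image ..
  also have "\<dots> = (\<lambda>c. Ecl ` c) ` Un.H"
    unfolding homology_def image_image by (rule image_cong) (simp_all add: hclass_DL Un.cycle_iff)
  finally show ?thesis .
qed

abbreviation "ZX b \<equiv> cycles (X b) (d b) 0"
abbreviation "hcX b \<equiv> hclass (X b) (d b) 0 minus"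
abbreviation "HX b \<equiv> homology (X b) (d b) 0 minus"

abbreviation "psi \<equiv> (\<lambda>b1 b2. hmap (X b2) (d b2) 0 minus id)"

lemma psi_eq: "psi b1 b2 c = hcX b2 (repr c)"
  by (simp add: hmap_def)

lemma stage_cycle_mono: "b \<le> b' \<Longrightarrow> z \<in> ZX b \<Longrightarrow> z \<in> ZX b'"
  using X_mono d_mono by (auto simp: cycles_def)

lemma stage_boundary_mono: assumes "b \<le> b'" "u \<in> d b ` X b" shows "u \<in> d b' ` X b'"
proof -
  obtain y where "y \<in> X b" "u = d b y" using assms(2) by blast
  then show ?thesis using X_mono[OF assms(1)] d_mono[OF assms(1)] by (metis image_eqI subsetD)
qed

lemma union_cycle_iff: "z \<in> Un.Z \<longleftrightarrow> (\<exists>b. z \<in> ZX b)"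
  by (auto simp: cycles_def U_iff dU_eq)

lemma union_boundary_iff: "u \<in> dU ` U \<longleftrightarrow> (\<exists>b. u \<in> d b ` X b)"
  unfolding U_def by (auto simp: dU_eq[symmetric] U_iff)

lemma stage_class_mono:
  assumes b: "b \<le> b'" and z: "z \<in> ZX b" "z' \<in> ZX b" and eq: "hcX b z = hcX b z'"
  shows "hcX b' z = hcX b' z'"
proof -
  have "z - z' \<in> d b ` X b" using eq chain_complex.hclass_eq_iff[OF stage z] by simp
  then have "z - z' \<in> d b' ` X b'" by (rule stage_boundary_mono[OF b])
  then show ?thesis
    using chain_complex.hclass_eq_iff[OF stage stage_cycle_mono[OF b z(1)] stage_cycle_mono[OF b z(2)]]
    by simp
qed

lemma union_class_eq_iff:
  assumes z1: "z1 \<in> ZX b1" and z2: "z2 \<in> ZX b2"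
  shows "Un.hc z1 = Un.hc z2 \<longleftrightarrow> (\<exists>b. b1 \<le> b \<and> b2 \<le> b \<and> hcX b z1 = hcX b z2)"
proof
  assume "Un.hc z1 = Un.hc z2"
  then have "z1 - z2 \<in> dU ` U"
    using Un.hclass_eq_iff union_cycle_iff z1 z2 by blast
  then obtain b3 where b3: "z1 - z2 \<in> d b3 ` X b3" using union_boundary_iff by blast
  define b where "b = max (max b1 b2) b3"
  have le: "b1 \<le> b" "b2 \<le> b" "b3 \<le> b" unfolding b_def by auto
  have "hcX b z1 = hcX b z2"
    using chain_complex.hclass_eq_iff[OF stage stage_cycle_mono[OF le(1) z1] stage_cycle_mono[OF le(2) z2]]
      stage_boundary_mono[OF le(3) b3] by simp
  then show "\<exists>b. b1 \<le> b \<and> b2 \<le> b \<and> hcX b z1 = hcX b z2" using le by blast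
next
  assume "\<exists>b. b1 \<le> b \<and> b2 \<le> b \<and> hcX b z1 = hcX b z2"
  then obtain b where b: "b1 \<le> b" "b2 \<le> b" "hcX b z1 = hcX b z2" by blast
  have zb: "z1 \<in> ZX b" "z2 \<in> ZX b" using stage_cycle_mono b z1 z2 by blast+
  then have "z1 - z2 \<in> dU ` U"
    using chain_complex.hclass_eq_iff[OF stage zb] b(3) union_boundary_iff by blast
  then show "Un.hc z1 = Un.hc z2"
    using Un.hclass_eq_iff union_cycle_iff zb by blast
qed

lemma psi_comp:
  assumes "b1 \<le> b2" "b2 \<le> b3" "c \<in> HX b1"
  shows "psi b2 b3 (psi b1 b2 c) = psi b1 b3 c"
proof -
  have z: "repr c \<in> ZX b2" using stage_cycle_mono chain_complex.repr_cycle[OF stage assms(3)] assms(1) by blast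
  then have c2: "hcX b2 (repr c) \<in> HX b2" by (rule chain_complex.hclass_in_homology[OF stage])
  have "hcX b2 (repr (hcX b2 (repr c))) = hcX b2 (repr c)"
    by (rule chain_complex.hclass_repr[OF stage c2])
  then have "hcX b3 (repr (hcX b2 (repr c))) = hcX b3 (repr c)"
    using stage_class_mono[OF assms(2) chain_complex.repr_cycle[OF stage c2] z] by blast
  then show ?thesis unfolding psi_eq .
qed

definition comparison :: "(real \<times> 'v set) set \<Rightarrow> (real \<times> 'v) set set" where
  "comparison \<xi> = (case dl_rep \<xi> of (b, c) \<Rightarrow> hclass DL DM DZ DS (dl_class X idm b (repr c)))"

lemma comparison_class:
  assumes c: "c \<in> HX b"
  shows "comparison (dl_class HX psi b c) = Ecl ` Un.hc (repr c)"
proof -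
  define \<xi> where "\<xi> = dl_class HX psi b c"
  have "dl_rep \<xi> \<in> \<xi>" unfolding \<xi>_def by (rule dl_rep_in[where Y=HX and \<phi>=psi, OF c])
  then obtain b' c' b3 where r: "dl_rep \<xi> = (b', c')" "c' \<in> HX b'" "b \<le> b3" "b' \<le> b3"
    "psi b b3 c = psi b' b3 c'"
    unfolding \<xi>_def dl_class_def by auto
  have z: "repr c \<in> ZX b" and z': "repr c' \<in> ZX b'"
    using chain_complex.repr_cycle[OF stage] c r(2) by blast+
  have "Un.hc (repr c) = Un.hc (repr c')"
    using union_class_eq_iff[OF z z'] r(3-5) by (auto simp: psi_eq)
  moreover have "repr c' \<in> U" using z' union_cycle_iff Un.cycle_iff by blast
  moreover have "comparison \<xi> = hclass DL DM DZ DS (Ecl (repr c'))"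
    unfolding comparison_def r(1) by (simp only: prod.case dl_class_idm[of b'])
  ultimately show ?thesis unfolding \<xi>_def by (simp add: hclass_DL)
qed

lemma comparison_inj: "inj_on comparison (dlim HX psi)"
proof (rule inj_onI)
  fix \<xi>1 \<xi>2 assume "\<xi>1 \<in> dlim HX psi" "\<xi>2 \<in> dlim HX psi" and eq: "comparison \<xi>1 = comparison \<xi>2"
  then obtain b1 c1 b2 c2 where c: "c1 \<in> HX b1" "\<xi>1 = dl_class HX psi b1 c1"
    "c2 \<in> HX b2" "\<xi>2 = dl_class HX psi b2 c2"
    unfolding dlim_def by blast
  have z: "repr c1 \<in> ZX b1" "repr c2 \<in> ZX b2"
    using chain_complex.repr_cycle[OF stage] c by blast+
  have "Un.hc (repr c1) \<subseteq> U" "Un.hc (repr c2) \<subseteq> U"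
    using Un.hclass_iff Un.cycle_iff by auto
  then have "Un.hc (repr c1) = Un.hc (repr c2)"
    using eq inj_on_image_eq_iff[OF inj_Ecl] by (simp add: c comparison_class)
  then obtain b where b: "b1 \<le> b" "b2 \<le> b" "psi b1 b c1 = psi b2 b c2"
    using union_class_eq_iff[OF z] by (auto simp: psi_eq)
  show "\<xi>1 = \<xi>2"
    unfolding c(2,4) by (rule dl_class_eqI[where Y=HX and \<phi>=psi, OF _ c(1,3) b]) (rule psi_comp)
qed

lemma union_classes_from_stages:
  "(\<lambda>p. Un.hc (repr (snd p))) ` (SIGMA b:UNIV. HX b) = Un.H"
proof (intro equalityI subsetI)
  fix h assume "h \<in> (\<lambda>p. Un.hc (repr (snd p))) ` (SIGMA b:UNIV. HX b)"
  then show "h \<in> Un.H"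
    using chain_complex.repr_cycle[OF stage] union_cycle_iff Un.hclass_in_homology by force
next
  fix h assume "h \<in> Un.H"
  then obtain z b where z: "z \<in> ZX b" "h = Un.hc z" using union_cycle_iff Un.homologyE by metis
  have c: "hcX b z \<in> HX b" using chain_complex.hclass_in_homology[OF stage z(1)] .
  have "Un.hc (repr (hcX b z)) = h"
    using union_class_eq_iff[OF chain_complex.repr_cycle[OF stage c] z(1)]
      chain_complex.hclass_repr[OF stage c] z(2) by blast
  then show "h \<in> (\<lambda>p. Un.hc (repr (snd p))) ` (SIGMA b:UNIV. HX b)"
    using c by force
qed

lemma comparison_image: "comparison ` dlim HX psi = homology DL DM DZ DS"
proof -
  have dl: "dlim HX psi = (\<lambda>p. dl_class HX psi (fst p) (snd p)) ` (SIGMA b:UNIV. HX b)"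
    unfolding dlim_def by force
  have "comparison ` dlim HX psi = (\<lambda>p. Ecl ` Un.hc (repr (snd p))) ` (SIGMA b:UNIV. HX b)"
    unfolding dl image_image by (intro image_cong) (auto simp: comparison_class)
  also have "\<dots> = (\<lambda>c. Ecl ` c) ` Un.H"
    unfolding union_classes_from_stages[symmetric] image_image ..
  finally show ?thesis by (simp add: homology_DL)
qed

theorem comparison_bij: "bij_betw comparison (dlim HX psi) (homology DL DM DZ DS)"
  using comparison_inj comparison_image by (rule bij_betw_imageI)

end

section \<open>The Morse complexes of a Floer triple\<close>

lemma csub_eq: "csub = minus"
  by (simp add: fun_eq_iff csub_def)

lemma fsub_eq: "fsub = minus"
  by (simp add: fun_eq_iff fsub_def csub_def)

lemma zero_fun_eq: "(\<lambda>_. 0) = 0"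
  by (simp add: fun_eq_iff)

locale floer =
  fixes C :: "'c set" and f :: "'c \<Rightarrow> real" and m :: "'c \<Rightarrow> 'c \<Rightarrow> 'k::field"
  assumes ft: "floer_triple C f m"
begin

abbreviation CMab :: "real \<Rightarrow> real \<Rightarrow> ('c \<Rightarrow> 'k) set" where "CMab a b \<equiv> CM C f a b"
abbreviation dM :: "real \<Rightarrow> real \<Rightarrow> ('c \<Rightarrow> 'k) \<Rightarrow> ('c \<Rightarrow> 'k)" where "dM a b \<equiv> bd C f m a b"
abbreviation pr :: "real \<Rightarrow> ('c \<Rightarrow> 'k) \<Rightarrow> ('c \<Rightarrow> 'k)" where "pr a \<equiv> prj f a"
abbreviation Lb :: "real \<Rightarrow> (real \<Rightarrow> 'c \<Rightarrow> 'k) set" where "Lb b \<equiv> LL C f b"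

lemma finite_Cab: "finite (Cab C f a b)"
proof (cases "a \<le> b")
  case True then show ?thesis using ft by (simp add: floer_triple_def)
next
  case False then have "Cab C f a b = {}" by (auto simp: Cab_def)
  then show ?thesis by simp
qed

lemma m_lt: "c1 \<in> C \<Longrightarrow> c2 \<in> C \<Longrightarrow> m c1 c2 \<noteq> 0 \<Longrightarrow> f c1 < f c2"
  using ft by (simp add: floer_triple_def)

lemma m_zero: "c1 \<in> C \<Longrightarrow> c2 \<in> C \<Longrightarrow> f c2 \<le> f c1 \<Longrightarrow> m c1 c2 = 0"
  using m_lt by force

lemma CM_iff: "x \<in> CMab a b \<longleftrightarrow> (\<forall>c. x c \<noteq> 0 \<longrightarrow> c \<in> C \<and> a \<le> f c \<and> f c \<le> b)"
  by (simp add: CM_def Cab_def)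

lemma CM_vanish: "x \<in> CMab a b \<longleftrightarrow> (\<forall>c. c \<notin> Cab C f a b \<longrightarrow> x c = 0)"
  by (auto simp: CM_def)

lemma CM_zero: "0 \<in> CMab a b"
  by (simp add: CM_vanish)

lemma CM_diff: "x \<in> CMab a b \<Longrightarrow> y \<in> CMab a b \<Longrightarrow> x - y \<in> CMab a b"
  by (simp add: CM_vanish)

lemma CM_add: "x \<in> CMab a b \<Longrightarrow> y \<in> CMab a b \<Longrightarrow> x + y \<in> CMab a b"
  by (simp add: CM_vanish)

lemma CM_mono: "b1 \<le> b2 \<Longrightarrow> CMab a b1 \<subseteq> CMab a b2"
  by (auto simp: CM_iff) (meson order_trans)

lemma bd_CM: "dM a b x \<in> CMab a b"
  by (simp add: CM_def bd_def)

lemma bd_diff: "dM a b (x - y) = dM a b x - dM a b y"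
  by (simp add: fun_eq_iff bd_def right_diff_distrib sum_subtractf)

text \<open>Raising the upper action bound does not change the differential, because
  \<open>m\<close> only counts trajectories going up in action.\<close>
lemma bd_mono:
  assumes x: "x \<in> CMab a b1" and b: "b1 \<le> b2"
  shows "dM a b2 x = dM a b1 x"
proof (rule ext)
  fix c'
  have sub: "Cab C f a b1 \<subseteq> Cab C f a b2" using b by (auto simp: Cab_def)
  have S: "(\<Sum>c\<in>Cab C f a b2. m c' c * x c) = (\<Sum>c\<in>Cab C f a b1. m c' c * x c)"
    by (rule sum.mono_neutral_right[OF finite_Cab sub]) (use x in \<open>auto simp: CM_vanish\<close>)
  have "(\<Sum>c\<in>Cab C f a b1. m c' c * x c) = 0" if "c' \<in> C" "b1 < f c'"
    using that m_zero[of c'] by (intro sum.neutral) (auto simp: Cab_def)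
  then show "dM a b2 x c' = dM a b1 x c'"
    using sub S by (auto simp: bd_def Cab_def)
qed

lemma bd_prj:
  assumes x: "x \<in> CMab a1 b" and a: "a1 \<le> a2"
  shows "dM a2 b (pr a2 x) = pr a2 (dM a1 b x)"
proof (rule ext)
  fix c'
  show "dM a2 b (pr a2 x) c' = pr a2 (dM a1 b x) c'"
  proof (cases "c' \<in> Cab C f a2 b")
    case True
    then have c': "c' \<in> Cab C f a1 b" "a2 \<le> f c'" "c' \<in> C" using a by (auto simp: Cab_def)
    have sub: "Cab C f a2 b \<subseteq> Cab C f a1 b" using a by (auto simp: Cab_def)
    have "(\<Sum>c\<in>Cab C f a2 b. m c' c * pr a2 x c) = (\<Sum>c\<in>Cab C f a2 b. m c' c * x c)"
      by (rule sum.cong) (auto simp: prj_def Cab_def)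
    also have "\<dots> = (\<Sum>c\<in>Cab C f a1 b. m c' c * x c)"
    proof (rule sum.mono_neutral_left[OF finite_Cab sub], rule ballI)
      fix c assume "c \<in> Cab C f a1 b - Cab C f a2 b"
      then show "m c' c * x c = 0" using c' m_zero[of c' c] by (auto simp: Cab_def)
    qed
    finally show ?thesis using True c' by (simp add: bd_def prj_def)
  next
    case False
    then show ?thesis by (auto simp: prj_def bd_def Cab_def)
  qed
qed

lemma chain_complex_CM: "chain_complex (CMab a b) (dM a b)"
  by unfold_locales (simp_all add: CM_zero CM_diff bd_CM bd_diff)

lemma increasing_CM: "increasing_complexes (\<lambda>b. CMab a b) (\<lambda>b. dM a b)"
  unfolding increasing_complexes_def using chain_complex_CM CM_mono bd_mono by blast

lemma prj_CM: "x \<in> CMab a1 b \<Longrightarrow> pr a2 x \<in> CMab a2 b"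
  by (auto simp: CM_iff prj_def)

lemma prj_diff: "pr a (x - y) = pr a x - pr a y"
  by (auto simp: fun_eq_iff prj_def)

lemma prj_add: "pr a (x + y) = pr a x + pr a y"
  by (auto simp: fun_eq_iff prj_def)

lemma prj_zero: "pr a 0 = 0"
  by (simp add: fun_eq_iff prj_def)

lemma prj_prj: "a2 \<le> a3 \<Longrightarrow> pr a3 (pr a2 x) = pr a3 x"
  by (simp add: fun_eq_iff prj_def)

lemma prj_id: "x \<in> CMab a b \<Longrightarrow> pr a x = x"
  by (auto simp: fun_eq_iff prj_def CM_iff)

lemma LL_iff: "x \<in> Lb b \<longleftrightarrow> (\<forall>a. x a \<in> CMab a b) \<and> (\<forall>a1 a2. a1 \<le> a2 \<longrightarrow> pr a2 (x a1) = x a2)"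
  by (simp add: LL_def ilim_def)

lemma chain_complex_LL: "chain_complex (Lb b) (dL C f m b)"
proof
  show "0 \<in> Lb b" by (simp add: LL_iff CM_zero prj_zero)
  fix x y assume "x \<in> Lb b" "y \<in> Lb b"
  then show "x - y \<in> Lb b" by (simp add: LL_iff CM_diff prj_diff)
  show "dL C f m b (x - y) = dL C f m b x - dL C f m b y"
    by (simp add: fun_eq_iff dL_def bd_diff)
next
  fix x assume "x \<in> Lb b"
  then show "dL C f m b x \<in> Lb b"
    by (auto simp: LL_iff dL_def bd_CM bd_prj[symmetric])
qed

lemma increasing_LL: "increasing_complexes (\<lambda>b. Lb b) (\<lambda>b. dL C f m b)"
proof -
  have "b1 \<le> b2 \<Longrightarrow> Lb b1 \<subseteq> Lb b2" for b1 b2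
    using CM_mono[of b1 b2] by (simp add: LL_iff subset_iff)
  moreover have "b1 \<le> b2 \<Longrightarrow> x \<in> Lb b1 \<Longrightarrow> dL C f m b2 x = dL C f m b1 x" for b1 b2 x
    unfolding dL_def LL_iff by (metis bd_mono)
  ultimately show ?thesis unfolding increasing_complexes_def using chain_complex_LL by blast
qed

text \<open>\<open>\<mu>_a\<close> is the comparison map of the increasing system \<open>CM_a^b\<close>, \<open>b \<in> \<real>\<close>.\<close>
theorem mu_a_bij: "bij_betw (mu_a C f m a) (limHM C f m a) (HD C f m a)"
proof -
  interpret D: increasing_complexes "\<lambda>b. CMab a b" "\<lambda>b. dM a b" by (rule increasing_CM)
  have "mu_a C f m a = D.comparison"
    unfolding mu_a_def D.comparison_def DD_def dD_def zD_def subD_def csub_eq zero_fun_eq ..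
  moreover have "limHM C f m a = dlim D.HX D.psi"
    unfolding limHM_def HM_def csub_eq zero_fun_eq ..
  moreover have "HD C f m a = homology D.DL D.DM D.DZ D.DS"
    unfolding HD_def DD_def dD_def zD_def subD_def csub_eq zero_fun_eq ..
  ultimately show ?thesis using D.comparison_bij by simp
qed

text \<open>\<open>\<mu>\<close> is the comparison map of the increasing system \<open>L^b\<close>, \<open>b \<in> \<real>\<close>.\<close>
theorem mu_bij: "bij_betw (mu C f m) (limHL C f m) (HLimL C f m)"
proof -
  interpret D: increasing_complexes "\<lambda>b. Lb b" "\<lambda>b. dL C f m b" by (rule increasing_LL)
  have "mu C f m = D.comparison"
    unfolding mu_def D.comparison_def LimL_def dLimL_def zLimL_def subLimL_def fsub_eq zero_fun_eq ..
  moreover have "limHL C f m = dlim D.HX D.psi"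
    unfolding limHL_def HL_def fsub_eq zero_fun_eq ..
  moreover have "HLimL C f m = homology D.DL D.DM D.DZ D.DS"
    unfolding HLimL_def LimL_def dLimL_def zLimL_def subLimL_def fsub_eq zero_fun_eq ..
  ultimately show ?thesis using D.comparison_bij by simp
qed

end

section \<open>Finite dimensionality of the Morse complexes\<close>

lemma (in vector_space) subspace_eq_if_dim_le:
  assumes S: "subspace S" and ST: "S \<subseteq> T"
    and TB: "T \<subseteq> span B" and B: "finite B" and dim: "dim T \<le> dim S"
  shows "S = T"
proof -
  obtain BS where BS: "BS \<subseteq> S" "independent BS" "S \<subseteq> span BS" "card BS = dim S"
    by (rule basis_exists)
  obtain BT where BT: "BS \<subseteq> BT" "BT \<subseteq> T" "independent BT" "T \<subseteq> span BT"
    using maximal_independent_subset_extend[of BS T] BS(1,2) ST by blast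
  have fBT: "finite BT" using independent_span_bound[OF B BT(3)] BT(2) TB by blast
  have "card BT \<le> card BS" using dim basis_card_eq_dim[OF BT(2,4,3)] BS(4) by simp
  then have "BS = BT" using card_subset_eq[OF fBT BT(1)] card_mono[OF fBT BT(1)] by linarith
  then have "T \<subseteq> span BS" using BT(4) by simp
  also have "\<dots> \<subseteq> S" using span_minimal[OF BS(1) S] .
  finally show ?thesis using ST by blast
qed

definition sc :: "'k::field \<Rightarrow> ('c \<Rightarrow> 'k) \<Rightarrow> ('c \<Rightarrow> 'k)" where
  "sc r x = (\<lambda>c. r * x c)"

lemma sc_apply [simp]: "sc r x c = r * x c"
  by (simp add: sc_def)

interpretation VS: vector_space "sc :: 'k::field \<Rightarrow> ('c \<Rightarrow> 'k) \<Rightarrow> ('c \<Rightarrow> 'k)"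
  by unfold_locales (simp_all add: fun_eq_iff algebra_simps)

lemma sum_fun_apply: "(\<Sum>i\<in>S. g i) x = (\<Sum>i\<in>S. g i x)"
  by (induction S rule: infinite_finite_induct) simp_all

context floer begin

definition delta :: "'c \<Rightarrow> 'c \<Rightarrow> 'k" where
  "delta c = (\<lambda>c'. if c' = c then 1 else 0)"

lemma CM_span: "CMab a b \<subseteq> VS.span (delta ` Cab C f a b)"
proof
  fix x assume x: "x \<in> CMab a b"
  have "x = (\<Sum>c\<in>Cab C f a b. sc (x c) (delta c))"
  proof (rule ext)
    fix c'
    have "(\<Sum>c\<in>Cab C f a b. sc (x c) (delta c)) c' = (\<Sum>c\<in>Cab C f a b. x c * (if c' = c then 1 else 0))"
      by (simp add: sum_fun_apply delta_def)
    also have "\<dots> = (\<Sum>c\<in>Cab C f a b. if c' = c then x c else 0)"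
      by (rule sum.cong) auto
    also have "\<dots> = x c'" using finite_Cab x by (simp add: sum.delta' CM_vanish)
    finally show "x c' = (\<Sum>c\<in>Cab C f a b. sc (x c) (delta c)) c'" by simp
  qed
  also have "\<dots> \<in> VS.span (delta ` Cab C f a b)"
    by (intro VS.span_sum VS.span_scale VS.span_base) simp
  finally show "x \<in> VS.span (delta ` Cab C f a b)" .
qed

lemma CM_subspace_eq:
  "VS.subspace S \<Longrightarrow> S \<subseteq> T \<Longrightarrow> T \<subseteq> CMab a b \<Longrightarrow> VS.dim T \<le> VS.dim S \<Longrightarrow> S = T"
  using VS.subspace_eq_if_dim_le[of S T "delta ` Cab C f a b"] CM_span finite_Cab by blast

lemma CM_sc: "x \<in> CMab a b \<Longrightarrow> sc r x \<in> CMab a b"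
  by (simp add: CM_vanish)

lemma prj_sc: "pr a (sc r x) = sc r (pr a x)"
  by (auto simp: fun_eq_iff prj_def)

lemma bd_sc: "dM a b (sc r x) = sc r (dM a b x)"
proof (rule ext)
  fix c'
  have "(\<Sum>c\<in>Cab C f a b. m c' c * (r * x c)) = r * (\<Sum>c\<in>Cab C f a b. m c' c * x c)"
    unfolding sum_distrib_left by (rule sum.cong) simp_all
  then show "dM a b (sc r x) c' = sc r (dM a b x) c'" by (simp add: bd_def)
qed

lemma subspace_prj:
  assumes W: "VS.subspace W" shows "VS.subspace (pr a ` W)"
  unfolding VS.subspace_def
proof (intro conjI ballI allI)
  show "0 \<in> pr a ` W" using VS.subspace_0[OF W] prj_zero by (metis image_eqI)
next
  fix x y assume "x \<in> pr a ` W" "y \<in> pr a ` W"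
  then obtain x' y' where "x' \<in> W" "y' \<in> W" "x = pr a x'" "y = pr a y'" by blast
  then show "x + y \<in> pr a ` W" using VS.subspace_add[OF W] prj_add by (metis image_eqI)
next
  fix r x assume "x \<in> pr a ` W"
  then obtain x' where "x' \<in> W" "x = pr a x'" by blast
  then show "sc r x \<in> pr a ` W" using VS.subspace_scale[OF W] prj_sc by (metis image_eqI)
qed

end

section \<open>A Mittag-Leffler argument for affine inverse systems\<close>

text \<open>Since all \<open>CM_a^b\<close> are
  finite dimensional, the images of \<open>T a'\<close> in \<open>CM_a^b\<close> stabilise as \<open>a' \<rightarrow> -\<infinity>\<close>, and
  the stable images form a surjective system; hence the inverse limit is nonempty.\<close>
locale affine_inverse_system = floer C f m for C :: "'c set" and f and m :: "'c \<Rightarrow> 'c \<Rightarrow> 'k::field" +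
  fixes b :: real and T W :: "real \<Rightarrow> ('c \<Rightarrow> 'k) set"
  assumes T_nonempty: "T a \<noteq> {}"
    and T_CM: "T a \<subseteq> CMab a b"
    and W_subspace: "VS.subspace (W a)"
    and W_CM: "W a \<subseteq> CMab a b"
    and T_coset: "t \<in> T a \<Longrightarrow> u \<in> T a \<longleftrightarrow> u - t \<in> W a"
    and T_prj: "a1 \<le> a2 \<Longrightarrow> t \<in> T a1 \<Longrightarrow> pr a2 t \<in> T a2"
begin

lemma W_prj: assumes "a1 \<le> a2" "w \<in> W a1" shows "pr a2 w \<in> W a2"
proof -
  obtain t where t: "t \<in> T a1" using T_nonempty by blast
  have "t + w \<in> T a1" using T_coset[OF t] assms(2) by simp
  then have "pr a2 (t + w) \<in> T a2" "pr a2 t \<in> T a2" using T_prj assms(1) t by auto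
  then have "pr a2 (t + w) - pr a2 t \<in> W a2" using T_coset by blast
  then show ?thesis by (simp add: prj_add)
qed

definition I :: "real \<Rightarrow> real \<Rightarrow> ('c \<Rightarrow> 'k) set" where "I a a' = pr a ` T a'"
definition J :: "real \<Rightarrow> real \<Rightarrow> ('c \<Rightarrow> 'k) set" where "J a a' = pr a ` W a'"

lemma J_subspace: "VS.subspace (J a a')"
  unfolding J_def by (rule subspace_prj[OF W_subspace])

lemma J_CM: "J a a' \<subseteq> CMab a b"
  unfolding J_def using W_CM prj_CM by blast

lemma J_mono: assumes "a'' \<le> a'" "a' \<le> a" shows "J a a'' \<subseteq> J a a'"
proof
  fix u assume "u \<in> J a a''"
  then obtain w where w: "w \<in> W a''" "u = pr a w" unfolding J_def by blast
  have "u = pr a (pr a' w)" using w prj_prj[OF assms(2)] by simp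
  then show "u \<in> J a a'" unfolding J_def using W_prj[OF assms(1) w(1)] by blast
qed

lemma I_mono: assumes "a'' \<le> a'" "a' \<le> a" shows "I a a'' \<subseteq> I a a'"
proof
  fix u assume "u \<in> I a a''"
  then obtain t where t: "t \<in> T a''" "u = pr a t" unfolding I_def by blast
  have "u = pr a (pr a' t)" using t prj_prj[OF assms(2)] by simp
  then show "u \<in> I a a'" unfolding I_def using T_prj[OF assms(1) t(1)] by blast
qed

lemma I_nonempty: "I a a' \<noteq> {}"
  unfolding I_def using T_nonempty by blast

lemma I_coset: assumes u0: "u0 \<in> I a a'" shows "u \<in> I a a' \<longleftrightarrow> u - u0 \<in> J a a'"
proof -
  obtain t0 where t0: "t0 \<in> T a'" "u0 = pr a t0" using u0 unfolding I_def by blast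
  show ?thesis
  proof
    assume "u \<in> I a a'"
    then obtain t where t: "t \<in> T a'" "u = pr a t" unfolding I_def by blast
    have "t - t0 \<in> W a'" using T_coset[OF t0(1)] t(1) by blast
    moreover have "u - u0 = pr a (t - t0)" using t t0 by (simp add: prj_diff)
    ultimately show "u - u0 \<in> J a a'" unfolding J_def by blast
  next
    assume "u - u0 \<in> J a a'"
    then obtain w where w: "w \<in> W a'" "u - u0 = pr a w" unfolding J_def by blast
    have "t0 + w \<in> T a'" using T_coset[OF t0(1)] w(1) by simp
    moreover have "u = pr a (t0 + w)" using w t0 by (simp add: prj_add algebra_simps)
    ultimately show "u \<in> I a a'" unfolding I_def by blast
  qed
qed

text \<open>Stabilisation: choose \<open>a0 \<le> a\<close> minimising \<open>dim J a a0\<close>; below \<open>a0\<close> the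
  decreasing subspaces \<open>J a a'\<close>, hence also their cosets \<open>I a a'\<close>, are constant.\<close>
lemma images_stabilise: "\<exists>a0 \<le> a. \<forall>a' \<le> a0. I a a' = I a a0"
proof -
  define P where "P n \<longleftrightarrow> (\<exists>a'. a' \<le> a \<and> VS.dim (J a a') = n)" for n
  have "P (VS.dim (J a a))" unfolding P_def by blast
  then have "P (LEAST n. P n)" by (rule LeastI)
  then obtain a0 where a0: "a0 \<le> a" "VS.dim (J a a0) = (LEAST n. P n)" unfolding P_def by blast
  have "I a a' = I a a0" if a': "a' \<le> a0" for a'
  proof -
    have "a' \<le> a" using a' a0(1) by simp
    then have "P (VS.dim (J a a'))" unfolding P_def by blast
    then have "VS.dim (J a a0) \<le> VS.dim (J a a')" unfolding a0(2) by (rule Least_le)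
    then have Jeq: "J a a' = J a a0"
      using CM_subspace_eq[OF J_subspace J_mono[OF a' a0(1)] J_CM] by blast
    obtain u0 where u0: "u0 \<in> I a a'" using I_nonempty by blast
    have u0': "u0 \<in> I a a0" using I_mono[OF a' a0(1)] u0 by blast
    show ?thesis
    proof (rule set_eqI)
      fix u show "u \<in> I a a' \<longleftrightarrow> u \<in> I a a0"
        using I_coset[OF u0, of u] I_coset[OF u0', of u] Jeq by simp
    qed
  qed
  then show ?thesis using a0(1) by blast
qed

definition a0 :: "real \<Rightarrow> real" where
  "a0 a = (SOME a0. a0 \<le> a \<and> (\<forall>a' \<le> a0. I a a' = I a a0))"

lemma a0_spec: "a0 a \<le> a \<and> (\<forall>a' \<le> a0 a. I a a' = I a (a0 a))"
  unfolding a0_def by (rule someI_ex[OF images_stabilise])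

lemma a0_le: "a0 a \<le> a"
  using a0_spec by blast

lemma I_a0: "a' \<le> a0 a \<Longrightarrow> I a a' = I a (a0 a)"
  using a0_spec by blast

definition S :: "real \<Rightarrow> ('c \<Rightarrow> 'k) set" where "S a = I a (a0 a)"

lemma S_nonempty: "S a \<noteq> {}"
  unfolding S_def by (rule I_nonempty)

lemma S_T: "S a \<subseteq> T a"
  unfolding S_def I_def using T_prj[OF a0_le] by blast

lemma S_lift: assumes "a2 \<le> a1" "y \<in> S a1" shows "\<exists>y'\<in>S a2. pr a1 y' = y"
proof -
  define a' where "a' = min (a0 a1) (a0 a2)"
  have "y \<in> I a1 a'" using assms(2) I_a0[of a' a1] unfolding S_def a'_def by simp
  then obtain t where t: "t \<in> T a'" "y = pr a1 t" unfolding I_def by blast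
  have "pr a2 t \<in> S a2" using t(1) I_a0[of a' a2] unfolding S_def I_def a'_def by auto
  moreover have "pr a1 (pr a2 t) = y" using prj_prj[OF assms(1)] t(2) by simp
  ultimately show ?thesis by blast
qed

text \<open>Lift step by step along \<open>b, b - 1, b - 2, \<dots>\<close>.\<close>
definition an :: "nat \<Rightarrow> real" where "an n = b - real n"

primrec Y :: "nat \<Rightarrow> 'c \<Rightarrow> 'k" where
  "Y 0 = (SOME y. y \<in> S (an 0))"
| "Y (Suc n) = (SOME y'. y' \<in> S (an (Suc n)) \<and> pr (an n) y' = Y n)"

lemma Y_S: "Y n \<in> S (an n) \<and> (n > 0 \<longrightarrow> pr (an (n - 1)) (Y n) = Y (n - 1))"
proof (induction n)
  case 0
  show ?case using S_nonempty by (simp add: some_in_eq)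
next
  case (Suc n)
  have "an (Suc n) \<le> an n" by (simp add: an_def)
  then have lift: "\<exists>y'. y' \<in> S (an (Suc n)) \<and> pr (an n) y' = Y n" using S_lift Suc.IH by blast
  show ?case using someI_ex[OF lift] by simp
qed

lemma Y_compat: "n \<le> k \<Longrightarrow> pr (an n) (Y k) = Y n"
proof (induction k rule: dec_induct)
  case base
  show ?case using Y_S S_T T_CM prj_id by blast
next
  case (step k)
  have "an k \<le> an n" using step.hyps(1) by (simp add: an_def)
  then have "pr (an n) (Y (Suc k)) = pr (an n) (pr (an k) (Y (Suc k)))" by (simp add: prj_prj)
  also have "pr (an k) (Y (Suc k)) = Y k" using Y_S[of "Suc k"] by simp
  finally show ?case using step.IH by simp
qed

definition N :: "real \<Rightarrow> nat" where "N a = nat \<lceil>b - a\<rceil>"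

lemma an_N: "an (N a) \<le> a"
  unfolding an_def N_def by linarith

lemma N_mono: "a1 \<le> a2 \<Longrightarrow> N a2 \<le> N a1"
  unfolding N_def by (intro nat_mono ceiling_mono) simp

theorem inverse_limit_nonempty: "\<exists>y\<in>Lb b. \<forall>a. y a \<in> T a"
proof (intro bexI allI)
  define y where "y a = pr a (Y (N a))" for a
  show "y a \<in> T a" for a
    unfolding y_def using T_prj[OF an_N] Y_S S_T by blast
  show "y \<in> Lb b" unfolding LL_iff
  proof (intro conjI allI impI)
    show "y a \<in> CMab a b" for a
      unfolding y_def using Y_S S_T T_CM prj_CM by blast
    fix a1 a2 :: real assume a: "a1 \<le> a2"
    have "pr a2 (y a1) = pr a2 (pr (an (N a2)) (Y (N a1)))"
      unfolding y_def using prj_prj[OF a] prj_prj[OF an_N] by simp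
    also have "\<dots> = y a2" unfolding y_def using Y_compat[OF N_mono[OF a]] by simp
    finally show "pr a2 (y a1) = y a2" .
  qed
qed

end

section \<open>The map \<open>\<nu>^b\<close> is an isomorphism\<close>

context floer begin

abbreviation "ZM a b \<equiv> cycles (CMab a b) (dM a b) 0"
abbreviation "BM a b \<equiv> dM a b ` CMab a b"
abbreviation "hcM a b \<equiv> hclass (CMab a b) (dM a b) 0 minus"
abbreviation "HMab a b \<equiv> homology (CMab a b) (dM a b) 0 minus"

text \<open>Condition (iii) of a Floer triple, restricted to an action window: all broken
  trajectories between generators of \<open>C_a^b\<close> pass through \<open>C_a^b\<close>.\<close>
lemma m_square_window:
  assumes c1: "c1 \<in> Cab C f a b" and c3: "c3 \<in> Cab C f a b"
  shows "(\<Sum>c2\<in>Cab C f a b. m c1 c2 * m c2 c3) = 0"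
proof -
  let ?N = "{c2\<in>C. m c1 c2 * m c2 c3 \<noteq> 0}"
  have sub: "?N \<subseteq> Cab C f a b"
  proof
    fix c assume c: "c \<in> ?N"
    then have "f c1 < f c" "f c < f c3" using m_lt c1 c3 by (auto simp: Cab_def)
    then show "c \<in> Cab C f a b" using c1 c3 c by (auto simp: Cab_def)
  qed
  have "(\<Sum>c2\<in>?N. m c1 c2 * m c2 c3) = (\<Sum>c2\<in>Cab C f a b. m c1 c2 * m c2 c3)"
    by (rule sum.mono_neutral_left[OF finite_Cab sub]) (auto simp: Cab_def)
  moreover have "(\<Sum>c2\<in>?N. m c1 c2 * m c2 c3) = 0"
    using ft c1 c3 by (simp add: floer_triple_def Cab_def)
  ultimately show ?thesis by simp
qed

lemma bd_bd: "dM a b (dM a b x) = 0"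
proof (rule ext)
  fix c'
  show "dM a b (dM a b x) c' = 0 c'"
  proof (cases "c' \<in> Cab C f a b")
    case False then show ?thesis by (simp add: bd_def)
  next
    case True
    have "dM a b (dM a b x) c' =
        (\<Sum>c\<in>Cab C f a b. m c' c * (\<Sum>c2\<in>Cab C f a b. m c c2 * x c2))"
      using True by (simp add: bd_def)
    also have "\<dots> = (\<Sum>c\<in>Cab C f a b. \<Sum>c2\<in>Cab C f a b. m c' c * m c c2 * x c2)"
      by (simp add: sum_distrib_left mult.assoc)
    also have "\<dots> = (\<Sum>c2\<in>Cab C f a b. (\<Sum>c\<in>Cab C f a b. m c' c * m c c2) * x c2)"
      by (subst sum.swap) (simp add: sum_distrib_right)
    also have "\<dots> = 0" using m_square_window[OF True] by simp
    finally show ?thesis by simp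
  qed
qed

lemma cycle_iff_CM: "z \<in> ZM a b \<longleftrightarrow> z \<in> CMab a b \<and> dM a b z = 0"
  by (simp add: cycles_def)

lemma prj_cycle: assumes a: "a1 \<le> a2" and z: "z \<in> ZM a1 b" shows "pr a2 z \<in> ZM a2 b"
proof -
  have "z \<in> CMab a1 b" "dM a1 b z = 0" using z by (simp_all add: cycle_iff_CM)
  then show ?thesis using bd_prj[OF _ a] prj_zero prj_CM by (simp add: cycle_iff_CM)
qed

lemma prj_boundary: assumes a: "a1 \<le> a2" and u: "u \<in> BM a1 b" shows "pr a2 u \<in> BM a2 b"
proof -
  obtain y where y: "y \<in> CMab a1 b" "u = dM a1 b y" using u by blast
  then have "pr a2 u = dM a2 b (pr a2 y)" using bd_prj[OF y(1) a] by simp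
  then show ?thesis using prj_CM[OF y(1)] by blast
qed

lemma hmap_prj:
  assumes a: "a1 \<le> a2" and c: "c \<in> HMab a1 b" and z: "z \<in> c"
  shows "hmap (CMab a2 b) (dM a2 b) 0 minus (pr a2) c = hcM a2 b (pr a2 z)"
proof -
  interpret A: chain_complex "CMab a1 b" "dM a1 b" by (rule chain_complex_CM)
  have rz: "repr c \<in> ZM a1 b" "z \<in> ZM a1 b" using A.homology_member(1)[OF c] A.repr_in[OF c] z by auto
  have "hcM a1 b (repr c) = hcM a1 b z" using A.hclass_repr[OF c] A.homology_member(2)[OF c z] by simp
  then have "repr c - z \<in> BM a1 b" using A.hclass_eq_iff[OF rz] by simp
  then have "pr a2 (repr c - z) \<in> BM a2 b" by (rule prj_boundary[OF a])
  then have "pr a2 (repr c) - pr a2 z \<in> BM a2 b" by (simp only: prj_diff)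
  then show ?thesis
    using chain_complex.hclass_eq_iff[OF chain_complex_CM prj_cycle[OF a rz(1)] prj_cycle[OF a rz(2)]]
    by (simp add: hmap_def)
qed

lemma subspace_cycles: "VS.subspace (ZM a b)"
proof -
  have "VS.subspace {y \<in> CMab a b. dM a b y = 0}"
    unfolding VS.subspace_def
    by (auto simp: CM_zero CM_add CM_sc bd_sc chain_complex.d_add[OF chain_complex_CM]
        chain_complex.d_zero[OF chain_complex_CM])
  then show ?thesis by (simp add: cycles_def)
qed

lemma subspace_boundaries: "VS.subspace (BM a b)"
  unfolding VS.subspace_def
proof (intro conjI ballI allI)
  show "0 \<in> BM a b" using chain_complex.zero_boundary[OF chain_complex_CM] .
  show "x + y \<in> BM a b" if "x \<in> BM a b" "y \<in> BM a b" for x y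
    using chain_complex.add_boundary[OF chain_complex_CM] that by blast
  show "sc r x \<in> BM a b" if x: "x \<in> BM a b" for r x
  proof -
    obtain y where "y \<in> CMab a b" "x = dM a b y" using x by blast
    then have "sc r y \<in> CMab a b" "sc r x = dM a b (sc r y)" by (simp_all add: CM_sc bd_sc)
    then show ?thesis by blast
  qed
qed

text \<open>First application of Mittag-Leffler: a compatible family of boundaries is the
  boundary of a compatible family.\<close>
lemma boundary_lift:
  assumes x: "x \<in> Lb b" and xB: "\<And>a. x a \<in> BM a b"
  shows "\<exists>y\<in>Lb b. dL C f m b y = x"
proof -
  define T where "T a = {y \<in> CMab a b. dM a b y = x a}" for a
  interpret affine_inverse_system C f m b T "\<lambda>a. ZM a b"
  proof
    show "T a \<noteq> {}" for a using xB[of a] unfolding T_def by force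
    show "T a \<subseteq> CMab a b" for a unfolding T_def by blast
    show "VS.subspace (ZM a b)" for a by (rule subspace_cycles)
    show "ZM a b \<subseteq> CMab a b" for a by (auto simp: cycle_iff_CM)
    show "u \<in> T a \<longleftrightarrow> u - t \<in> ZM a b" if "t \<in> T a" for t a u
    proof -
      have t: "t \<in> CMab a b" "dM a b t = x a" using that unfolding T_def by auto
      have "u \<in> CMab a b \<longleftrightarrow> u - t \<in> CMab a b"
        using CM_diff[OF _ t(1), of u] CM_add[OF _ t(1), of "u - t"] by auto
      then show ?thesis unfolding T_def cycle_iff_CM using t bd_diff[of a b u t] by auto
    qed
    show "pr a2 t \<in> T a2" if "a1 \<le> a2" "t \<in> T a1" for a1 a2 t
      using that bd_prj[of t a1 b a2] prj_CM[of t a1 b a2] x unfolding T_def LL_iff by auto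
  qed
  obtain y where "y \<in> Lb b" "\<And>a. y a \<in> T a" using inverse_limit_nonempty by blast
  moreover have "dL C f m b y = x" using calculation(2) unfolding T_def dL_def by auto
  ultimately show ?thesis by blast
qed

text \<open>Since \<open>\<partial> \<circ> \<partial> = 0\<close>, a homology class of \<open>CM_a^b\<close> is a coset of the boundaries.\<close>
lemma homology_class_coset:
  assumes c: "c \<in> HMab a b" and t: "t \<in> c"
  shows "u \<in> c \<longleftrightarrow> u - t \<in> BM a b"
proof -
  interpret A: chain_complex "CMab a b" "dM a b" by (rule chain_complex_CM)
  have ct: "c = hcM a b t" and tZ: "t \<in> ZM a b"
    using A.homology_member[OF c t] by simp_all
  have "u \<in> ZM a b" if "u - t \<in> BM a b"
  proof -
    obtain y where "y \<in> CMab a b" "u - t = dM a b y" using \<open>u - t \<in> BM a b\<close> by blast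
    then have y: "y \<in> CMab a b" "u = dM a b y + t" by (simp_all add: algebra_simps)
    then show ?thesis
      using tZ CM_add[OF bd_CM] A.d_add[OF bd_CM] bd_bd by (simp add: cycle_iff_CM)
  qed
  then show ?thesis unfolding ct A.hclass_iff by blast
qed

lemma ilimHM_iff: "h \<in> ilimHM C f m b \<longleftrightarrow> (\<forall>a. h a \<in> HMab a b) \<and>
    (\<forall>a1 a2. a1 \<le> a2 \<longrightarrow> hmap (CMab a2 b) (dM a2 b) 0 minus (pr a2) (h a1) = h a2)"
  unfolding ilimHM_def HM_def csub_eq zero_fun_eq ilim_def by simp

text \<open>Second application of Mittag-Leffler: a compatible family of homology classes
  has a compatible family of representatives.\<close>
lemma representative_lift:
  assumes h: "h \<in> ilimHM C f m b"
  shows "\<exists>x\<in>Lb b. \<forall>a. x a \<in> h a"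
proof -
  have hA: "\<And>a. h a \<in> HMab a b"
    and hc: "\<And>a1 a2. a1 \<le> a2 \<Longrightarrow> hmap (CMab a2 b) (dM a2 b) 0 minus (pr a2) (h a1) = h a2"
    using h unfolding ilimHM_iff by auto
  interpret affine_inverse_system C f m b h "\<lambda>a. BM a b"
  proof
    fix a
    show "h a \<noteq> {}" using chain_complex.repr_in[OF chain_complex_CM hA] by blast
    show "h a \<subseteq> CMab a b"
      using chain_complex.homology_member(1)[OF chain_complex_CM hA] cycle_iff_CM by blast
    show "VS.subspace (BM a b)" by (rule subspace_boundaries)
    show "BM a b \<subseteq> CMab a b" using bd_CM by blast
    show "u \<in> h a \<longleftrightarrow> u - t \<in> BM a b" if "t \<in> h a" for t u
      by (rule homology_class_coset[OF hA that])
  next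
    fix a1 a2 t assume a: "a1 \<le> a2" and t: "t \<in> h a1"
    have "h a2 = hcM a2 b (pr a2 t)" using hc[OF a] hmap_prj[OF a hA t] by simp
    moreover have "pr a2 t \<in> ZM a2 b"
      using prj_cycle[OF a chain_complex.homology_member(1)[OF chain_complex_CM hA t]] .
    ultimately show "pr a2 t \<in> h a2" using chain_complex.hclass_self[OF chain_complex_CM] by simp
  qed
  show ?thesis using inverse_limit_nonempty .
qed

abbreviation "ZL b \<equiv> cycles (Lb b) (dL C f m b) 0"
abbreviation "hcL b \<equiv> hclass (Lb b) (dL C f m b) 0 minus"

lemma L_cycle_iff: "x \<in> ZL b \<longleftrightarrow> x \<in> Lb b \<and> (\<forall>a. x a \<in> ZM a b)"
  by (auto simp: cycles_def LL_iff dL_def fun_eq_iff)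

lemma HL_eq: "HL C f m b = hcL b ` ZL b"
  unfolding HL_def fsub_eq zero_fun_eq homology_def ..

lemma nu_hclass:
  assumes x: "x \<in> ZL b" shows "nu C f m b (hcL b x) = (\<lambda>a. hcM a b (x a))"
proof -
  interpret L: chain_complex "Lb b" "dL C f m b" by (rule chain_complex_LL)
  let ?r = "repr (hcL b x)"
  have "?r \<in> ZL b" "?r - x \<in> dL C f m b ` Lb b"
    using L.repr_in[OF L.hclass_in_homology[OF x]] L.hclass_iff by auto
  then obtain y where r: "?r \<in> ZL b" and y: "y \<in> Lb b" "?r - x = dL C f m b y" by blast
  have "hcM a b (?r a) = hcM a b (x a)" for a
  proof -
    have "?r a - x a = dM a b (y a)" using fun_cong[OF y(2), of a] by (simp add: dL_def)
    then have "?r a - x a \<in> BM a b" using y(1) LL_iff by blast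
    then show ?thesis
      using chain_complex.hclass_eq_iff[OF chain_complex_CM] r x L_cycle_iff by blast
  qed
  then show ?thesis unfolding nu_def Let_def csub_eq zero_fun_eq by (simp add: fun_eq_iff)
qed

lemma nu_inj: "inj_on (nu C f m b) (HL C f m b)"
proof (rule inj_onI)
  interpret L: chain_complex "Lb b" "dL C f m b" by (rule chain_complex_LL)
  fix c1 c2 assume "c1 \<in> HL C f m b" "c2 \<in> HL C f m b" and eq: "nu C f m b c1 = nu C f m b c2"
  then obtain x1 x2 where x: "x1 \<in> ZL b" "x2 \<in> ZL b" and c: "c1 = hcL b x1" "c2 = hcL b x2"
    unfolding HL_eq by blast
  have "x1 a - x2 a \<in> BM a b" for a
    using fun_cong[OF eq, of a] chain_complex.hclass_eq_iff[OF chain_complex_CM] x L_cycle_iff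
    unfolding c nu_hclass[OF x(1)] nu_hclass[OF x(2)] by blast
  moreover have "x1 - x2 \<in> Lb b" using x L.diff_closed L.cycle_iff by blast
  ultimately have "x1 - x2 \<in> dL C f m b ` Lb b" using boundary_lift[of "x1 - x2"] by force
  then show "c1 = c2" unfolding c using L.hclass_eq_iff[OF x] by simp
qed

lemma nu_image: "nu C f m b ` HL C f m b = ilimHM C f m b"
proof -
  have "nu C f m b ` HL C f m b = (\<lambda>x a. hcM a b (x a)) ` ZL b"
    unfolding HL_eq image_image by (rule image_cong) (simp_all add: nu_hclass)
  also have "\<dots> = ilimHM C f m b"
  proof (intro equalityI subsetI)
    fix h assume "h \<in> (\<lambda>x a. hcM a b (x a)) ` ZL b"
    then obtain x where x: "x \<in> Lb b" "\<And>a. x a \<in> ZM a b" and h: "h = (\<lambda>a. hcM a b (x a))"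
      using L_cycle_iff by blast
    have "hmap (CMab a2 b) (dM a2 b) 0 minus (pr a2) (h a1) = h a2" if a: "a1 \<le> a2" for a1 a2
    proof -
      have "hmap (CMab a2 b) (dM a2 b) 0 minus (pr a2) (h a1) = hcM a2 b (pr a2 (x a1))"
        unfolding h by (rule hmap_prj[OF a chain_complex.hclass_in_homology[OF chain_complex_CM x(2)]
            chain_complex.hclass_self[OF chain_complex_CM x(2)]])
      also have "pr a2 (x a1) = x a2" using x(1) a LL_iff by simp
      finally show ?thesis unfolding h .
    qed
    then show "h \<in> ilimHM C f m b"
      unfolding ilimHM_iff h using chain_complex.hclass_in_homology[OF chain_complex_CM x(2)] by blast
  next
    fix h assume h: "h \<in> ilimHM C f m b"
    then obtain x where x: "x \<in> Lb b" "\<And>a. x a \<in> h a" using representative_lift by blast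
    have "x a \<in> ZM a b" "hcM a b (x a) = h a" for a
      using chain_complex.homology_member[OF chain_complex_CM _ x(2)] h
      unfolding ilimHM_iff by blast+
    then show "h \<in> (\<lambda>x a. hcM a b (x a)) ` ZL b"
      using x(1) L_cycle_iff by (auto intro!: image_eqI[of _ _ x])
  qed
  finally show ?thesis .
qed

theorem nu_bij: "bij_betw (nu C f m b) (HL C f m b) (ilimHM C f m b)"
  using nu_inj nu_image by (rule bij_betw_imageI)

end

theorem mainTheorem6:
  fixes C :: "'c set" and f :: "'c \<Rightarrow> real" and m :: "'c \<Rightarrow> 'c \<Rightarrow> 'k::field"
  assumes "floer_triple C f m"
  shows "(\<forall>a. bij_betw (mu_a C f m a) (limHM C f m a) (HD C f m a))
       \<and> (\<forall>b. bij_betw (nu C f m b) (HL C f m b) (ilimHM C f m b))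
       \<and> bij_betw (mu C f m) (limHL C f m) (HLimL C f m)"
proof -
  interpret floer C f m using assms by unfold_locales
  show ?thesis using mu_a_bij nu_bij mu_bij by blast
qed

end
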